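(* Let $\bar t>0$, $I=(0,\bar t)$, let $\gamma_1,\gamma_2\in\mathrm{Lip}(I)$ (extended continuously to $\bar I$) with $\gamma_1<0<\gamma_2$ on $I$ and $\gamma_1(0)=\gamma_1(\bar t)=\gamma_2(0)=\gamma_2(\bar t)=0$, let $D=\{(y,t)\in\mathbb W: t\in I,\ \gamma_1(t)<y<\gamma_2(t)\}$, and let $\phi\in C(\partial D)$ with $\phi_1,\phi_2\in\mathrm{Lip}(I)$. Assume $\zeta<1$. Then there exists a bi-Lipschitz increasing function $\lambda:\bar I\to\bar I$ such that: (i) $p_2(\lambda(s))-p_1(s)\in H_{p_1(s)}$ for all $s\in\bar I$; (ii) for all $s,\lambda'\in\bar I$, if $p_2(\lambda')-p_1(s)\in H_{p_1(s)}$ then $\lambda'=\lambda(s)$; (iii) $\lambda(0)=0$ and $\lambda(\bar t)=\bar t$; (iv) $\frac{1-\zeta}{1+\zeta}\le\mathrm{Lip}(\lambda)\le\frac{1+\zeta}{1-\zeta}$ and $\frac{1-\zeta}{1+\zeta}\le\mathrm{Lip}(\lambda^{-1})\le\frac{1+\zeta}{1-\zeta}$.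
   Context: $\mathbb H$ is $\mathbb R^3$ with product $(x,y,t)\cdot(\xi,\eta,\tau)=(x+\xi,y+\eta,t+\tau+2(y\xi-x\eta))$; $X=\partial_x+2y\partial_t$, $Y=\partial_y-2x\partial_t$, and $H_p=\mathrm{span}\{X(p),Y(p)\}$ (a linear subspace of $\mathbb R^3$). $\mathbb W=\{x=0\}$ with coordinates $(y,t)$. Set $\phi_i(s)=\phi(\gamma_i(s),s)$, $\|\gamma\|_\infty=\max_i\|\gamma_i\|_\infty$, $\mathrm{Lip}(\gamma)=\max_i\mathrm{Lip}(\gamma_i)$, $\|\phi\|_\infty=\max_i\|\phi_i\|_\infty$, $\mathrm{Lip}(\phi)=\max_i\mathrm{Lip}(\phi_i)$, $\zeta=4(\|\gamma\|_\infty+\mathrm{Lip}(\gamma))(\|\phi\|_\infty+\mathrm{Lip}(\phi))$, and $p_i(s)=(\phi_i(s),\gamma_i(s),s+2\gamma_i(s)\phi_i(s))$ for $s\in\bar I$, $i=1,2$. *)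

theory Defs
  imports "HOL-Analysis.Analysis"
begin

definition HX :: "real \<times> real \<times> real \<Rightarrow> real \<times> real \<times> real" where
  "HX p = (case p of (x, y, t) \<Rightarrow> (1, 0, 2 * y))"

definition HY :: "real \<times> real \<times> real \<Rightarrow> real \<times> real \<times> real" where
  "HY p = (case p of (x, y, t) \<Rightarrow> (0, 1, -2 * x))"

definition Hplane :: "real \<times> real \<times> real \<Rightarrow> (real \<times> real \<times> real) set" where
  "Hplane p = span {HX p, HY p}"

definition Lipc :: "real set \<Rightarrow> (real \<Rightarrow> real) \<Rightarrow> real" where
  "Lipc S f = Inf {L. L-lipschitz_on S f}"

definition supn :: "real set \<Rightarrow> (real \<Rightarrow> real) \<Rightarrow> real" where
  "supn S f = Sup ((\<lambda>s. \<bar>f s\<bar>) ` S)"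

definition phii :: "(real \<times> real \<Rightarrow> real) \<Rightarrow> (real \<Rightarrow> real) \<Rightarrow> real \<Rightarrow> real" where
  "phii \<phi> \<gamma> s = \<phi> (\<gamma> s, s)"

definition zeta :: "real \<Rightarrow> (real \<Rightarrow> real) \<Rightarrow> (real \<Rightarrow> real) \<Rightarrow> (real \<times> real \<Rightarrow> real) \<Rightarrow> real" where
  "zeta tbar \<gamma>1 \<gamma>2 \<phi> =
     4 * (max (supn {0<..<tbar} \<gamma>1) (supn {0<..<tbar} \<gamma>2)
          + max (Lipc {0<..<tbar} \<gamma>1) (Lipc {0<..<tbar} \<gamma>2))
       * (max (supn {0<..<tbar} (phii \<phi> \<gamma>1)) (supn {0<..<tbar} (phii \<phi> \<gamma>2))
          + max (Lipc {0<..<tbar} (phii \<phi> \<gamma>1)) (Lipc {0<..<tbar} (phii \<phi> \<gamma>2)))"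

definition pcurve :: "(real \<times> real \<Rightarrow> real) \<Rightarrow> (real \<Rightarrow> real) \<Rightarrow> real \<Rightarrow> real \<times> real \<times> real" where
  "pcurve \<phi> \<gamma> s = (phii \<phi> \<gamma> s, \<gamma> s, s + 2 * \<gamma> s * phii \<phi> \<gamma> s)"

end

theory Submission
  imports Defs
begin

(*
  The horizontality condition p2(l) - p1(s) \<in> H(p1(s)) reduces to the scalar equation
  l - s + Q(s, l) = 0 with Q(s, l) = 2 (\<gamma>2(l) - \<gamma>1(s)) (\<phi>2(l) + \<phi>1(s)), and Q is \<zeta>-Lipschitz
  jointly in (s, l). For two solutions (s, l) and (s', l') the increments therefore satisfy
  |(l' - l) - (s' - s)| \<le> \<zeta> (|l' - l| + |s' - s|); as \<zeta> < 1 this forces l' - l to have the sign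
  of s' - s and to be comparable to it up to the factor (1 + \<zeta>)/(1 - \<zeta>). A solution exists
  for each s by the intermediate value theorem, because Q vanishes at (0, 0) and (t, t).
*)

lemma difference_quotient_le_Lipc:
  assumes "\<exists>L. L-lipschitz_on S f" "x \<in> S" "y \<in> S" "x \<noteq> y"
  shows "dist (f x) (f y) / dist x y \<le> Lipc S f"
  unfolding Lipc_def
proof (rule cInf_greatest)
  show "{L. L-lipschitz_on S f} \<noteq> {}"
    using assms(1) by blast
  fix L assume "L \<in> {L. L-lipschitz_on S f}"
  then show "dist (f x) (f y) / dist x y \<le> L"
    using lipschitz_onD[of L S f x y] assms(2-4) by (simp add: divide_le_eq)
qed

lemma Lipc_nonneg:
  assumes "\<exists>L. L-lipschitz_on S f"
  shows "0 \<le> Lipc S f"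
  unfolding Lipc_def
  by (rule cInf_greatest) (use assms lipschitz_on_nonneg in auto)

lemma lipschitz_on_Lipc:
  assumes "\<exists>L. L-lipschitz_on S f"
  shows "(Lipc S f)-lipschitz_on S f"
proof (rule lipschitz_onI)
  fix x y assume "x \<in> S" "y \<in> S"
  then show "dist (f x) (f y) \<le> Lipc S f * dist x y"
    using difference_quotient_le_Lipc[OF assms, of x y]
    by (cases "x = y") (simp_all add: divide_le_eq)
qed (rule Lipc_nonneg[OF assms])

lemma Lipc_least:
  assumes "L-lipschitz_on S f"
  shows "Lipc S f \<le> L"
  unfolding Lipc_def
  by (rule cInf_lower) (use assms in \<open>auto intro!: bdd_belowI[of _ 0] dest: lipschitz_on_nonneg\<close>)

lemma one_le_Lipc_if_two_fixed_points:
  assumes "\<exists>L. L-lipschitz_on S f" "x \<in> S" "y \<in> S" "x \<noteq> y" "f x = x" "f y = y"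
  shows "1 \<le> Lipc S f"
  using difference_quotient_le_Lipc[OF assms(1-4)] assms(4-6) by simp

lemma lipschitz_on_interval_Lipc:
  assumes "a < b" "continuous_on {a..b} f" "\<exists>L. L-lipschitz_on {a<..<b} f"
  shows "(Lipc {a<..<b} f)-lipschitz_on {a..b} f"
  using lipschitz_on_closure[OF lipschitz_on_Lipc[OF assms(3)]] assms(1,2) by simp

lemma abs_le_supn_interval:
  fixes f :: "real \<Rightarrow> real"
  assumes "a < b" "continuous_on {a..b} f" "x \<in> {a..b}"
  shows "\<bar>f x\<bar> \<le> supn {a<..<b} f"
proof -
  have "compact ((\<lambda>s. \<bar>f s\<bar>) ` {a..b})"
    by (intro compact_continuous_image continuous_intros assms(2)) simp
  then have "bdd_above ((\<lambda>s. \<bar>f s\<bar>) ` {a<..<b})"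
    by (meson bdd_above_mono bounded_imp_bdd_above compact_imp_bounded
        greaterThanLessThan_subseteq_atLeastAtMost_iff image_mono order_refl)
  then show ?thesis
    using continuous_le_on_closure[of "{a<..<b}" "\<lambda>s. \<bar>f s\<bar>" x "supn {a<..<b} f"] assms
    by (simp add: continuous_on_rabs supn_def) (meson cSUP_upper greaterThanLessThan_iff)
qed

lemma common_bounds_on_interval:
  fixes f g :: "real \<Rightarrow> real"
  assumes "a < b" "continuous_on {a..b} f" "continuous_on {a..b} g"
    and "\<exists>L. L-lipschitz_on {a<..<b} f" "\<exists>L. L-lipschitz_on {a<..<b} g"
  defines "L \<equiv> max (Lipc {a<..<b} f) (Lipc {a<..<b} g)"
    and "M \<equiv> max (supn {a<..<b} f) (supn {a<..<b} g)"
  shows "L-lipschitz_on {a..b} f" "L-lipschitz_on {a..b} g"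
    and "\<forall>x\<in>{a..b}. \<bar>f x\<bar> \<le> M \<and> \<bar>g x\<bar> \<le> M"
  using lipschitz_on_interval_Lipc[OF assms(1,2,4)] lipschitz_on_interval_Lipc[OF assms(1,3,5)]
    abs_le_supn_interval[OF assms(1,2)] abs_le_supn_interval[OF assms(1,3)]
  unfolding L_def M_def by (auto intro: lipschitz_on_mono simp: le_max_iff_disj)

lemma close_imp_comparable:
  fixes x y z :: real
  assumes "\<bar>x - y\<bar> \<le> z * (\<bar>x\<bar> + \<bar>y\<bar>)"
  shows "(1 - z) * \<bar>x\<bar> \<le> (1 + z) * \<bar>y\<bar>"
  using assms by (simp add: algebra_simps)

lemma close_imp_same_sign:
  fixes x y z :: real
  assumes "\<bar>x - y\<bar> \<le> z * (\<bar>x\<bar> + \<bar>y\<bar>)" "z < 1" "0 < y"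
  shows "0 < x"
proof (rule ccontr)
  assume "\<not> 0 < x"
  then have "(1 - z) * (\<bar>x\<bar> + \<bar>y\<bar>) \<le> 0"
    using assms(1,3) by (simp add: algebra_simps)
  moreover have "0 < (1 - z) * (\<bar>x\<bar> + \<bar>y\<bar>)"
    using assms(2,3) by simp
  ultimately show False by simp
qed

locale lipschitz_perturbed_identity =
  fixes a b z :: real and Q :: "real \<Rightarrow> real \<Rightarrow> real"
  assumes interval: "a < b"
    and z_less_1: "z < 1"
    and Q_diagonal_ends: "Q a a = 0" "Q b b = 0"
    and Q_lipschitz: "\<And>s s' l l'. s \<in> {a..b} \<Longrightarrow> s' \<in> {a..b} \<Longrightarrow> l \<in> {a..b} \<Longrightarrow> l' \<in> {a..b} \<Longrightarrow>
      \<bar>Q s' l' - Q s l\<bar> \<le> z * (\<bar>l' - l\<bar> + \<bar>s' - s\<bar>)"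
begin

lemma z_nonneg: "0 \<le> z"
proof -
  have "0 \<le> z * (b - a)"
    using Q_lipschitz[of a b a a] interval by simp
  then show ?thesis
    using interval by (simp add: zero_le_mult_iff)
qed

lemma solution_increments_close:
  assumes "s \<in> {a..b}" "s' \<in> {a..b}" "l \<in> {a..b}" "l' \<in> {a..b}"
    and "l - s + Q s l = 0" "l' - s' + Q s' l' = 0"
  shows "\<bar>(l' - l) - (s' - s)\<bar> \<le> z * (\<bar>l' - l\<bar> + \<bar>s' - s\<bar>)"
proof -
  have "(l' - l) - (s' - s) = - (Q s' l' - Q s l)"
    using assms(5,6) by linarith
  then show ?thesis
    using Q_lipschitz[OF assms(1-4)] by simp
qed

lemma solution_exists:
  assumes s: "s \<in> {a..b}"
  shows "\<exists>l\<in>{a..b}. l - s + Q s l = 0"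
proof -
  have "\<bar>Q s a - Q a a\<bar> \<le> z * (s - a)" "\<bar>Q s b - Q b b\<bar> \<le> z * (b - s)"
    using Q_lipschitz[of a s a a] Q_lipschitz[of b s b b] s interval by auto
  moreover have "z * (s - a) \<le> s - a" "z * (b - s) \<le> b - s"
    using mult_right_mono[of z 1 "s - a"] mult_right_mono[of z 1 "b - s"] s z_less_1 by auto
  ultimately have "a - s + Q s a \<le> 0" "0 \<le> b - s + Q s b"
    using Q_diagonal_ends by auto
  moreover have "z-lipschitz_on {a..b} (Q s)"
    using Q_lipschitz[of s s] s z_nonneg by (auto intro!: lipschitz_onI simp: dist_real_def)
  then have "continuous_on {a..b} (\<lambda>l. l - s + Q s l)"
    by (intro continuous_intros lipschitz_on_continuous_on)
  ultimately show ?thesis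
    using IVT'[of "\<lambda>l. l - s + Q s l" a 0 b] interval by fastforce
qed

lemma solution_unique:
  assumes "s \<in> {a..b}" "l \<in> {a..b}" "l' \<in> {a..b}" "l - s + Q s l = 0" "l' - s + Q s l' = 0"
  shows "l = l'"
  using close_imp_comparable[OF solution_increments_close[OF assms(1,1,2,3,4,5)]] z_less_1
  by (simp add: mult_le_0_iff)

definition solution :: "real \<Rightarrow> real" where
  "solution s = (THE l. l \<in> {a..b} \<and> l - s + Q s l = 0)"

lemma solution_solves:
  assumes "s \<in> {a..b}"
  shows "solution s \<in> {a..b}" "solution s - s + Q s (solution s) = 0"
proof -
  have "\<exists>!l. l \<in> {a..b} \<and> l - s + Q s l = 0"
    using solution_exists[OF assms] solution_unique[OF assms] by blast
  then have "solution s \<in> {a..b} \<and> solution s - s + Q s (solution s) = 0"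
    unfolding solution_def by (rule theI')
  then show "solution s \<in> {a..b}" "solution s - s + Q s (solution s) = 0"
    by simp_all
qed

lemma solution_eqI:
  assumes "s \<in> {a..b}" "l \<in> {a..b}" "l - s + Q s l = 0"
  shows "solution s = l"
  using solution_unique[OF assms(1) solution_solves(1)[OF assms(1)] assms(2)
      solution_solves(2)[OF assms(1)] assms(3)] .

lemma solution_ends: "solution a = a" "solution b = b"
  using solution_eqI[of a a] solution_eqI[of b b] interval Q_diagonal_ends by auto

lemma solution_increments_comparable:
  assumes "s \<in> {a..b}" "s' \<in> {a..b}"
  shows "(1 - z) * \<bar>solution s' - solution s\<bar> \<le> (1 + z) * \<bar>s' - s\<bar>"
    and "(1 - z) * \<bar>s' - s\<bar> \<le> (1 + z) * \<bar>solution s' - solution s\<bar>"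
proof -
  note close = solution_increments_close[OF assms solution_solves(1)[OF assms(1)]
      solution_solves(1)[OF assms(2)] solution_solves(2)[OF assms(1)] solution_solves(2)[OF assms(2)]]
  show "(1 - z) * \<bar>solution s' - solution s\<bar> \<le> (1 + z) * \<bar>s' - s\<bar>"
    using close_imp_comparable[OF close] .
  show "(1 - z) * \<bar>s' - s\<bar> \<le> (1 + z) * \<bar>solution s' - solution s\<bar>"
    using close_imp_comparable[of "s' - s" "solution s' - solution s" z] close
    by (simp add: abs_minus_commute add.commute)
qed

lemma strict_mono_on_solution: "strict_mono_on {a..b} solution"
proof (rule strict_mono_onI)
  fix s s' assume "s \<in> {a..b}" "s' \<in> {a..b}" "s < s'"
  then show "solution s < solution s'"
    using close_imp_same_sign[OF solution_increments_close z_less_1] solution_solves by simp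
qed

lemma lipschitz_on_solution: "((1 + z) / (1 - z))-lipschitz_on {a..b} solution"
proof (rule lipschitz_onI)
  fix s s' assume "s \<in> {a..b}" "s' \<in> {a..b}"
  then show "dist (solution s) (solution s') \<le> (1 + z) / (1 - z) * dist s s'"
    using solution_increments_comparable(1)[of s' s] z_less_1
    by (simp add: dist_real_def field_simps)
next
  show "0 \<le> (1 + z) / (1 - z)"
    using z_nonneg z_less_1 by simp
qed

lemma solution_image: "solution ` {a..b} = {a..b}"
proof
  show "solution ` {a..b} \<subseteq> {a..b}"
    using solution_solves(1) by blast
  have "continuous_on {a..b} solution"
    using lipschitz_on_continuous_on[OF lipschitz_on_solution] .
  then show "{a..b} \<subseteq> solution ` {a..b}"
    using IVT'[of solution a _ b] solution_ends interval by fastforce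
qed

lemma lipschitz_on_inverse_solution:
  "((1 + z) / (1 - z))-lipschitz_on {a..b} (the_inv_into {a..b} solution)"
proof (rule lipschitz_onI)
  fix x y assume "x \<in> {a..b}" "y \<in> {a..b}"
  then obtain s s' where s: "s \<in> {a..b}" "s' \<in> {a..b}" and "x = solution s" "y = solution s'"
    using solution_image by (metis imageE)
  moreover have "the_inv_into {a..b} solution (solution t) = t" if "t \<in> {a..b}" for t
    using the_inv_into_f_f[OF strict_mono_on_imp_inj_on[OF strict_mono_on_solution] that] .
  ultimately show "dist (the_inv_into {a..b} solution x) (the_inv_into {a..b} solution y)
      \<le> (1 + z) / (1 - z) * dist x y"
    using solution_increments_comparable(2)[OF s(2,1)] z_less_1
    by (simp add: dist_real_def field_simps)
next
  show "0 \<le> (1 + z) / (1 - z)"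
    using z_nonneg z_less_1 by simp
qed

(* The lower bounds are weak: a map fixing both endpoints has Lipschitz constant at least 1. *)
lemma Lipc_solution_bounds:
  shows "(1 - z) / (1 + z) \<le> Lipc {a..b} solution"
    and "Lipc {a..b} solution \<le> (1 + z) / (1 - z)"
    and "(1 - z) / (1 + z) \<le> Lipc {a..b} (the_inv_into {a..b} solution)"
    and "Lipc {a..b} (the_inv_into {a..b} solution) \<le> (1 + z) / (1 - z)"
proof -
  have "(1 - z) / (1 + z) \<le> 1"
    using z_nonneg by simp
  moreover have "the_inv_into {a..b} solution a = a" "the_inv_into {a..b} solution b = b"
    using the_inv_into_f_f[OF strict_mono_on_imp_inj_on[OF strict_mono_on_solution]] solution_ends
      interval by (metis atLeastAtMost_iff order_refl less_imp_le)+
  ultimately show "(1 - z) / (1 + z) \<le> Lipc {a..b} solution"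
    and "(1 - z) / (1 + z) \<le> Lipc {a..b} (the_inv_into {a..b} solution)"
    using one_le_Lipc_if_two_fixed_points[of "{a..b}" _ a b] lipschitz_on_solution
      lipschitz_on_inverse_solution solution_ends interval by fastforce+
  show "Lipc {a..b} solution \<le> (1 + z) / (1 - z)"
    and "Lipc {a..b} (the_inv_into {a..b} solution) \<le> (1 + z) / (1 - z)"
    using Lipc_least lipschitz_on_solution lipschitz_on_inverse_solution by blast+
qed

end

lemma mem_Hplane_iff:
  "v \<in> Hplane (x, y, t) \<longleftrightarrow> snd (snd v) = 2 * y * fst v - 2 * x * fst (snd v)"
proof -
  obtain a b c where v: "v = (a, b, c)"
    by (cases v) auto
  have "v \<in> Hplane (x, y, t) \<longleftrightarrow> (\<exists>k m. v - k *\<^sub>R (1, 0, 2 * y) = m *\<^sub>R (0, 1, -2 * x))"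
    unfolding Hplane_def HX_def HY_def by (auto simp: span_insert span_singleton)
  also have "\<dots> \<longleftrightarrow> c = 2 * y * a - 2 * x * b"
    unfolding v by (auto simp: algebra_simps)
  finally show ?thesis
    using v by simp
qed

lemma pcurve_diff_in_Hplane_iff:
  "pcurve \<phi> \<gamma>2 l - pcurve \<phi> \<gamma>1 s \<in> Hplane (pcurve \<phi> \<gamma>1 s) \<longleftrightarrow>
     l - s + 2 * (\<gamma>2 l - \<gamma>1 s) * (phii \<phi> \<gamma>2 l + phii \<phi> \<gamma>1 s) = 0"
  unfolding pcurve_def mem_Hplane_iff by (simp add: algebra_simps)

lemma graph_points_in_frontier:
  fixes \<gamma>1 \<gamma>2 :: "real \<Rightarrow> real"
  assumes "tbar > 0"
    and sign: "\<forall>s\<in>{0<..<tbar}. \<gamma>1 s < 0 \<and> 0 < \<gamma>2 s"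
    and ends: "\<gamma>1 0 = 0" "\<gamma>1 tbar = 0" "\<gamma>2 0 = 0" "\<gamma>2 tbar = 0"
    and D: "D = {(y, t). t \<in> {0<..<tbar} \<and> \<gamma>1 t < y \<and> y < \<gamma>2 t}"
    and s: "s \<in> {0..tbar}"
  shows "(\<gamma>1 s, s) \<in> frontier D" "(\<gamma>2 s, s) \<in> frontier D"
proof -
  obtain p q where "p \<noteq> q" "open_segment p q \<subseteq> D" "{(\<gamma>1 s, s), (\<gamma>2 s, s)} \<subseteq> {p, q}"
  proof (cases "s \<in> {0<..<tbar}")
    case True
    with sign have "\<gamma>1 s < \<gamma>2 s" by force
    have "open_segment (\<gamma>1 s, s) (\<gamma>2 s, s) \<subseteq> D"
    proof
      fix p assume p: "p \<in> open_segment (\<gamma>1 s, s) (\<gamma>2 s, s)"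
      obtain y t where "p = (y, t)"
        by fastforce
      with p \<open>\<gamma>1 s < \<gamma>2 s\<close> have "y \<in> {\<gamma>1 s<..<\<gamma>2 s}" "t = s"
        using open_segment_PairD closed_segment_PairD[OF open_closed_segment]
        by (fastforce simp: open_segment_eq_real_ivl)+
      with \<open>p = (y, t)\<close> True show "p \<in> D"
        unfolding D by auto
    qed
    with \<open>\<gamma>1 s < \<gamma>2 s\<close> show ?thesis
      by (intro that[of "(\<gamma>1 s, s)" "(\<gamma>2 s, s)"]) auto
  next
    case False
    then have "\<gamma>1 s = 0" "\<gamma>2 s = 0"
      using s ends by auto
    have "open_segment (0, 0) (0 :: real, tbar) \<subseteq> D"
    proof
      fix p assume p: "p \<in> open_segment (0, 0) (0 :: real, tbar)"
      obtain y t where "p = (y, t)"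
        by fastforce
      with p \<open>tbar > 0\<close> have "y = 0" "t \<in> {0<..<tbar}"
        using open_segment_PairD closed_segment_PairD[OF open_closed_segment]
        by (fastforce simp: open_segment_eq_real_ivl)+
      with \<open>p = (y, t)\<close> sign show "p \<in> D"
        unfolding D by auto
    qed
    with \<open>\<gamma>1 s = 0\<close> \<open>\<gamma>2 s = 0\<close> show ?thesis
      using False s \<open>tbar > 0\<close> by (intro that[of "(0, 0)" "(0, tbar)"]) auto
  qed
  then have "{p, q} \<subseteq> closure D"
    using closure_mono[of "open_segment p q" D] ends_in_segment(1,2)[of p q] by auto
  with \<open>{(\<gamma>1 s, s), (\<gamma>2 s, s)} \<subseteq> {p, q}\<close>
  have "(\<gamma>1 s, s) \<in> closure D" "(\<gamma>2 s, s) \<in> closure D"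
    by auto
  moreover have "(\<gamma>1 s, s) \<notin> interior D" "(\<gamma>2 s, s) \<notin> interior D"
    using interior_subset[of D] unfolding D by auto
  ultimately show "(\<gamma>1 s, s) \<in> frontier D" "(\<gamma>2 s, s) \<in> frontier D"
    unfolding frontier_def by auto
qed

lemma continuous_on_phii:
  assumes "continuous_on K \<phi>" "continuous_on S \<gamma>" "\<And>s. s \<in> S \<Longrightarrow> (\<gamma> s, s) \<in> K"
  shows "continuous_on S (phii \<phi> \<gamma>)"
  unfolding phii_def
  by (rule continuous_on_compose2[OF assms(1)]) (use assms(2,3) in \<open>auto intro!: continuous_intros\<close>)

lemma coupling_term_estimate:
  fixes f1 f2 g1 g2 :: "real \<Rightarrow> real"
  assumes "Lf-lipschitz_on S f1" "Lf-lipschitz_on S f2" "\<forall>x\<in>S. \<bar>f1 x\<bar> \<le> Mf \<and> \<bar>f2 x\<bar> \<le> Mf"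
    and "Lg-lipschitz_on S g1" "Lg-lipschitz_on S g2" "\<forall>x\<in>S. \<bar>g1 x\<bar> \<le> Mg \<and> \<bar>g2 x\<bar> \<le> Mg"
    and "s \<in> S" "s' \<in> S" "l \<in> S" "l' \<in> S"
  shows "\<bar>2 * (f2 l' - f1 s') * (g2 l' + g1 s') - 2 * (f2 l - f1 s) * (g2 l + g1 s)\<bar>
    \<le> 4 * (Mf + Lf) * (Mg + Lg) * (\<bar>l' - l\<bar> + \<bar>s' - s\<bar>)"
proof -
  define d where "d = \<bar>l' - l\<bar> + \<bar>s' - s\<bar>"
  define u where "u = f2 l - f1 s"
  define u' where "u' = f2 l' - f1 s'"
  define v where "v = g2 l + g1 s"
  define v' where "v' = g2 l' + g1 s'"
  have lip: "\<bar>h x - h y\<bar> \<le> L * \<bar>x - y\<bar>" if "L-lipschitz_on S h" "x \<in> S" "y \<in> S" for L h x y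
    using lipschitz_onD[OF that] by (simp add: dist_real_def)
  have "\<bar>u' - u\<bar> \<le> Lf * d"
    using lip[OF assms(2,10,9)] lip[OF assms(1,8,7)] unfolding u_def u'_def d_def by argo
  moreover have "\<bar>v' - v\<bar> \<le> Lg * d"
    using lip[OF assms(5,10,9)] lip[OF assms(4,8,7)] unfolding v_def v'_def d_def by argo
  moreover have "\<bar>f2 l\<bar> \<le> Mf" "\<bar>f1 s\<bar> \<le> Mf" "\<bar>g2 l'\<bar> \<le> Mg" "\<bar>g1 s'\<bar> \<le> Mg"
    using assms(3,6-10) by blast+
  then have "\<bar>u\<bar> \<le> 2 * Mf" "\<bar>v'\<bar> \<le> 2 * Mg"
    unfolding u_def v'_def by linarith+
  moreover have "0 \<le> Lf" "0 \<le> Lg"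
    using lipschitz_on_nonneg assms(1,4) by blast+
  moreover have "0 \<le> Mf" "0 \<le> Mg" "0 \<le> d"
    using \<open>\<bar>f1 s\<bar> \<le> Mf\<close> \<open>\<bar>g1 s'\<bar> \<le> Mg\<close> unfolding d_def by linarith+
  ultimately have "\<bar>(u' - u) * v'\<bar> \<le> (Lf * d) * (2 * Mg)" "\<bar>u * (v' - v)\<bar> \<le> (2 * Mf) * (Lg * d)"
    unfolding abs_mult by (auto intro!: mult_mono)
  moreover have "2 * u' * v' - 2 * u * v = 2 * ((u' - u) * v') + 2 * (u * (v' - v))"
    by (simp add: algebra_simps)
  ultimately have "\<bar>2 * u' * v' - 2 * u * v\<bar> \<le> 2 * ((Lf * d) * (2 * Mg)) + 2 * ((2 * Mf) * (Lg * d))"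
    by linarith
  also have "\<dots> \<le> 4 * (Mf + Lf) * (Mg + Lg) * d"
    using \<open>0 \<le> Lf\<close> \<open>0 \<le> Lg\<close> \<open>0 \<le> Mf\<close> \<open>0 \<le> Mg\<close> \<open>0 \<le> d\<close>
    by (simp add: algebra_simps)
  finally show ?thesis
    unfolding u_def u'_def v_def v'_def d_def by (simp add: mult.assoc)
qed

theorem theorem2p1:
  fixes tbar :: real
    and \<gamma>1 \<gamma>2 :: "real \<Rightarrow> real"
    and \<phi> :: "real \<times> real \<Rightarrow> real"
    and D :: "(real \<times> real) set"
  assumes tbar_pos: "tbar > 0"
    and g1_lip: "\<exists>L. L-lipschitz_on {0<..<tbar} \<gamma>1"
    and g2_lip: "\<exists>L. L-lipschitz_on {0<..<tbar} \<gamma>2"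
    and g1_cont: "continuous_on {0..tbar} \<gamma>1"
    and g2_cont: "continuous_on {0..tbar} \<gamma>2"
    and g_sign: "\<forall>s\<in>{0<..<tbar}. \<gamma>1 s < 0 \<and> 0 < \<gamma>2 s"
    and g_ends: "\<gamma>1 0 = 0" "\<gamma>1 tbar = 0" "\<gamma>2 0 = 0" "\<gamma>2 tbar = 0"
    and D_def: "D = {(y, t). t \<in> {0<..<tbar} \<and> \<gamma>1 t < y \<and> y < \<gamma>2 t}"
    and phi_cont: "continuous_on (frontier D) \<phi>"
    and phi1_lip: "\<exists>L. L-lipschitz_on {0<..<tbar} (phii \<phi> \<gamma>1)"
    and phi2_lip: "\<exists>L. L-lipschitz_on {0<..<tbar} (phii \<phi> \<gamma>2)"
    and zeta_lt: "zeta tbar \<gamma>1 \<gamma>2 \<phi> < 1"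
  shows "\<exists>lam :: real \<Rightarrow> real.
              strict_mono_on {0..tbar} lam \<and> lam ` {0..tbar} = {0..tbar}
            \<and> (\<exists>L. L-lipschitz_on {0..tbar} lam)
            \<and> (\<exists>L. L-lipschitz_on {0..tbar} (the_inv_into {0..tbar} lam))
            \<and> (\<forall>s\<in>{0..tbar}. pcurve \<phi> \<gamma>2 (lam s) - pcurve \<phi> \<gamma>1 s \<in> Hplane (pcurve \<phi> \<gamma>1 s))
            \<and> (\<forall>s\<in>{0..tbar}. \<forall>l\<in>{0..tbar}.
                 pcurve \<phi> \<gamma>2 l - pcurve \<phi> \<gamma>1 s \<in> Hplane (pcurve \<phi> \<gamma>1 s) \<longrightarrow> l = lam s)
            \<and> lam 0 = 0 \<and> lam tbar = tbar
            \<and> (1 - zeta tbar \<gamma>1 \<gamma>2 \<phi>) / (1 + zeta tbar \<gamma>1 \<gamma>2 \<phi>) \<le> Lipc {0..tbar} lam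
            \<and> Lipc {0..tbar} lam \<le> (1 + zeta tbar \<gamma>1 \<gamma>2 \<phi>) / (1 - zeta tbar \<gamma>1 \<gamma>2 \<phi>)
            \<and> (1 - zeta tbar \<gamma>1 \<gamma>2 \<phi>) / (1 + zeta tbar \<gamma>1 \<gamma>2 \<phi>)
                 \<le> Lipc {0..tbar} (the_inv_into {0..tbar} lam)
            \<and> Lipc {0..tbar} (the_inv_into {0..tbar} lam)
                 \<le> (1 + zeta tbar \<gamma>1 \<gamma>2 \<phi>) / (1 - zeta tbar \<gamma>1 \<gamma>2 \<phi>)"
proof -
  have graphs: "(\<gamma>1 s, s) \<in> frontier D" "(\<gamma>2 s, s) \<in> frontier D" if "s \<in> {0..tbar}" for s
    using graph_points_in_frontier[OF tbar_pos g_sign g_ends D_def that] by simp_all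
  have "continuous_on {0..tbar} (phii \<phi> \<gamma>1)" "continuous_on {0..tbar} (phii \<phi> \<gamma>2)"
    using continuous_on_phii[OF phi_cont] g1_cont g2_cont graphs by blast+
  note \<gamma>_bounds = common_bounds_on_interval[OF tbar_pos g1_cont g2_cont g1_lip g2_lip]
    and \<phi>_bounds = common_bounds_on_interval[OF tbar_pos this phi1_lip phi2_lip]
  define Q where "Q s l = 2 * (\<gamma>2 l - \<gamma>1 s) * (phii \<phi> \<gamma>2 l + phii \<phi> \<gamma>1 s)" for s l
  interpret lipschitz_perturbed_identity 0 tbar "zeta tbar \<gamma>1 \<gamma>2 \<phi>" Q
  proof
    fix s s' l l' assume "s \<in> {0..tbar}" "s' \<in> {0..tbar}" "l \<in> {0..tbar}" "l' \<in> {0..tbar}"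
    then show "\<bar>Q s' l' - Q s l\<bar> \<le> zeta tbar \<gamma>1 \<gamma>2 \<phi> * (\<bar>l' - l\<bar> + \<bar>s' - s\<bar>)"
      unfolding Q_def zeta_def by (rule coupling_term_estimate[OF \<gamma>_bounds \<phi>_bounds])
  qed (use tbar_pos zeta_lt g_ends Q_def in auto)
  have "pcurve \<phi> \<gamma>2 l - pcurve \<phi> \<gamma>1 s \<in> Hplane (pcurve \<phi> \<gamma>1 s) \<longleftrightarrow> l - s + Q s l = 0" for s l
    unfolding Q_def by (rule pcurve_diff_in_Hplane_iff)
  then show ?thesis
    using strict_mono_on_solution solution_image lipschitz_on_solution lipschitz_on_inverse_solution
      solution_solves solution_eqI solution_ends Lipc_solution_bounds
    by (intro exI[of _ solution]) blast
qed

end
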